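(* Let $\frac{4}{3}\le p\le\frac{\log 3}{\log 2}$. The function $L(\alpha)=1+2\sin^p(\frac{\alpha}{2})+\cos^p\alpha$ on $\alpha\in[0,\frac{\pi}{3}]$ attains its minimum at the endpoints of the interval. In particular $L(\alpha)\ge 2$ for all $\alpha\in[0,\frac{\pi}{3}]$. *)

theory Defs
  imports Complex_Main
begin

definition Lfun :: "real \<Rightarrow> real \<Rightarrow> real" where
  "Lfun p \<alpha> = 1 + 2 * (sin (\<alpha> / 2)) powr p + (cos \<alpha>) powr p"

end

theory Submission
  imports Defs
begin

text \<open>
  Put \<open>y = sin\<^sup>2(\<alpha>/2) \<in> [0, 1/4]\<close>; then \<open>cos \<alpha> = 1 - 2y\<close> and
  \<open>L = 1 + 2 y\<^bsup>p/2\<^esup> + (1 - 2y)\<^bsup>p\<^esup>\<close>. The derivative in \<open>y\<close> has the sign of the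
  log-ratio \<open>\<phi>(y) = (p/2 - 1) ln y - ln 2 - (p - 1) ln (1 - 2y)\<close> of its two terms, and
  \<open>\<phi>'(y) = (p/2 - 1 + p y) / (y (1 - 2y))\<close>, so \<open>\<phi>\<close> first decreases and then increases
  up to \<open>\<phi>(1/4) = 0\<close>. Hence the derivative never passes from negative to positive
  values, which rules out an interior value below both endpoint values. These are
  \<open>L(0) = 2\<close> and \<open>L(\<pi>/3) = 1 + 3 \<cdot> 2\<^bsup>-p\<^esup> \<ge> 2\<close>, since \<open>2\<^bsup>p\<^esup> \<le> 3\<close>.
\<close>

lemma min_endpoints_le_if_derivative_no_neg_to_pos:
  fixes f f' :: "real \<Rightarrow> real"
  assumes cont: "continuous_on {a..b} f"
    and deriv: "\<And>x. a < x \<Longrightarrow> x < b \<Longrightarrow> (f has_real_derivative f' x) (at x)"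
    and no_valley: "\<And>s t. a < s \<Longrightarrow> s < t \<Longrightarrow> t < b \<Longrightarrow> f' s < 0 \<Longrightarrow> 0 < f' t \<Longrightarrow> False"
    and x: "x \<in> {a..b}"
  shows "min (f a) (f b) \<le> f x"
proof (rule ccontr)
  assume "\<not> ?thesis"
  then have below: "f x < f a" "f x < f b" by auto
  then have ax: "a < x" and xb: "x < b" using x by (auto simp: less_le)
  have differentiable: "\<forall>z. a < z \<and> z < b \<longrightarrow> f differentiable (at z)"
    using deriv real_differentiable_def by blast
  obtain s d where s: "a < s" "s < x" and ds: "(f has_real_derivative d) (at s)"
    and "f x - f a = (x - a) * d"
    using MVT[OF ax continuous_on_subset[OF cont]] differentiable xb by fastforce
  then have "(x - a) * d < 0" using below by simp
  then have "d < 0" using ax by (simp add: mult_less_0_iff)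
  moreover have "d = f' s" using DERIV_unique[OF ds deriv] s xb by simp
  ultimately have "f' s < 0" by simp
  obtain t e where t: "x < t" "t < b" and dt: "(f has_real_derivative e) (at t)"
    and "f b - f x = (b - x) * e"
    using MVT[OF xb continuous_on_subset[OF cont]] differentiable ax by fastforce
  then have "0 < (b - x) * e" using below by simp
  then have "0 < e" using xb by (simp add: zero_less_mult_iff)
  moreover have "e = f' t" using DERIV_unique[OF dt deriv] t ax by simp
  ultimately have "0 < f' t" by simp
  show False using no_valley[OF \<open>a < s\<close> _ \<open>t < b\<close> \<open>f' s < 0\<close> \<open>0 < f' t\<close>] s t by simp
qed

lemma sgn_diff_eq_sgn_ln_diff:
  fixes a b :: real
  assumes "0 < a" "0 < b"
  shows "sgn (a - b) = sgn (ln a - ln b)"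
  using assms by (cases a b rule: linorder_cases) auto

lemma power2_powr_half:
  fixes x :: real
  assumes "0 \<le> x"
  shows "(x\<^sup>2) powr (p/2) = x powr p"
proof (cases "x = 0")
  case False
  then have "x\<^sup>2 = x powr 2" using assms by simp
  then show ?thesis by (simp add: powr_powr)
qed simp

lemma two_powr_le_three:
  assumes "p \<le> ln 3 / ln 2"
  shows "2 powr p \<le> (3::real)"
proof -
  have "p * ln 2 \<le> ln 3" using assms by (simp add: le_divide_eq)
  then show ?thesis by (simp add: powr_def mult.commute ln_ge_iff)
qed

lemma sin_half_bounds:
  assumes "\<alpha> \<in> {0..pi/3}"
  shows "0 \<le> sin (\<alpha>/2)" "sin (\<alpha>/2) \<le> 1/2"
proof -
  show "0 \<le> sin (\<alpha>/2)" using assms by (intro sin_ge_zero) auto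
  have "sin (\<alpha>/2) \<le> sin (pi/6)" using assms by (intro sin_monotone_2pi_le) auto
  then show "sin (\<alpha>/2) \<le> 1/2" by (simp add: sin_30)
qed

definition Lsq :: "real \<Rightarrow> real \<Rightarrow> real" where
  "Lsq p y = 2 * y powr (p/2) + (1 - 2*y) powr p"

definition Lsq_deriv :: "real \<Rightarrow> real \<Rightarrow> real" where
  "Lsq_deriv p y = p * y powr (p/2 - 1) - 2 * p * (1 - 2*y) powr (p - 1)"

definition Lsq_deriv_log_ratio :: "real \<Rightarrow> real \<Rightarrow> real" where
  "Lsq_deriv_log_ratio p y = (p/2 - 1) * ln y - ln 2 - (p - 1) * ln (1 - 2*y)"

lemma Lfun_eq_Lsq:
  assumes "0 \<le> sin (\<alpha>/2)"
  shows "Lfun p \<alpha> = 1 + Lsq p ((sin (\<alpha>/2))\<^sup>2)"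
  using assms cos_double_sin[of "\<alpha>/2"]
  by (simp add: Lfun_def Lsq_def power2_powr_half)

lemma has_real_derivative_Lsq:
  assumes "0 < y" "y < 1/2"
  shows "(Lsq p has_real_derivative Lsq_deriv p y) (at y)"
proof -
  have first: "((\<lambda>y. y powr (p/2)) has_real_derivative (p/2) * y powr (p/2 - 1)) (at y)"
    using has_real_derivative_powr[OF \<open>0 < y\<close>] .
  have "((\<lambda>y. 1 - 2*y) has_real_derivative -2) (at y)"
    by (auto intro!: derivative_eq_intros)
  then have second: "((\<lambda>y. (1 - 2*y) powr p) has_real_derivative p * (1 - 2*y) powr (p - 1) * -2) (at y)"
    using DERIV_fun_powr[of "\<lambda>y. 1 - 2*y" "-2" y p] assms by simp
  have "((\<lambda>y. 2 * y powr (p/2) + (1 - 2*y) powr p) has_real_derivative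
          2 * ((p/2) * y powr (p/2 - 1)) + p * (1 - 2*y) powr (p - 1) * -2) (at y)"
    by (intro DERIV_add DERIV_cmult first second)
  then show ?thesis unfolding Lsq_def[abs_def] Lsq_deriv_def by (simp add: algebra_simps)
qed

lemma sgn_Lsq_deriv:
  assumes "0 < p" "0 < y" "y < 1/2"
  shows "sgn (Lsq_deriv p y) = sgn (Lsq_deriv_log_ratio p y)"
proof -
  define a where "a = y powr (p/2 - 1)"
  define b where "b = 2 * (1 - 2*y) powr (p - 1)"
  have "0 < a" "0 < b" using assms unfolding a_def b_def by auto
  have "Lsq_deriv p y = p * (a - b)"
    unfolding Lsq_deriv_def a_def b_def by (simp add: algebra_simps)
  moreover have "Lsq_deriv_log_ratio p y = ln a - ln b"
    using assms unfolding Lsq_deriv_log_ratio_def a_def b_def by (simp add: ln_mult ln_powr)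
  ultimately show ?thesis
    using sgn_diff_eq_sgn_ln_diff[OF \<open>0 < a\<close> \<open>0 < b\<close>] \<open>0 < p\<close> by (simp add: sgn_mult)
qed

lemma has_real_derivative_Lsq_deriv_log_ratio:
  assumes "0 < y" "y < 1/2"
  shows "(Lsq_deriv_log_ratio p has_real_derivative (p/2 - 1 + p * y) / (y * (1 - 2*y))) (at y)"
proof -
  have "(Lsq_deriv_log_ratio p has_real_derivative
          (p/2 - 1) * inverse y - 0 - (p - 1) * (inverse (1 - 2*y) * (0 - 2 * 1))) (at y)"
    unfolding Lsq_deriv_log_ratio_def[abs_def] using assms
    by (intro DERIV_diff DERIV_cmult DERIV_const DERIV_chain2[OF DERIV_ln] DERIV_ln DERIV_ident)
      auto
  moreover have "(p/2 - 1) * inverse y - 0 - (p - 1) * (inverse (1 - 2*y) * (0 - 2 * 1))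
      = (p/2 - 1 + p * y) / (y * (1 - 2*y))"
    using assms by (simp add: field_simps)
  ultimately show ?thesis by simp
qed

lemma Lsq_deriv_log_ratio_antimono:
  assumes "0 < p" "0 < s" "s \<le> t" "t \<le> 1/p - 1/2" "t < 1/2"
  shows "Lsq_deriv_log_ratio p t \<le> Lsq_deriv_log_ratio p s"
proof (rule DERIV_nonpos_imp_nonincreasing[OF \<open>s \<le> t\<close>])
  fix x assume x: "s \<le> x" "x \<le> t"
  then have "0 < x" "x < 1/2" using assms by auto
  have "p * x \<le> p * (1/p - 1/2)" using x assms by (intro mult_left_mono) auto
  also have "\<dots> = 1 - p/2" using \<open>0 < p\<close> by (simp add: field_simps)
  finally have "(p/2 - 1 + p * x) / (x * (1 - 2*x)) \<le> 0"
    using \<open>0 < x\<close> \<open>x < 1/2\<close> by (intro divide_nonpos_pos) auto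
  then show "\<exists>d. (Lsq_deriv_log_ratio p has_real_derivative d) (at x) \<and> d \<le> 0"
    using has_real_derivative_Lsq_deriv_log_ratio[OF \<open>0 < x\<close> \<open>x < 1/2\<close>] by blast
qed

lemma Lsq_deriv_log_ratio_mono:
  assumes "0 < p" "0 < s" "1/p - 1/2 \<le> s" "s \<le> t" "t < 1/2"
  shows "Lsq_deriv_log_ratio p s \<le> Lsq_deriv_log_ratio p t"
proof (rule DERIV_nonneg_imp_nondecreasing[OF \<open>s \<le> t\<close>])
  fix x assume x: "s \<le> x" "x \<le> t"
  then have "0 < x" "x < 1/2" using assms by auto
  have "1 - p/2 = p * (1/p - 1/2)" using \<open>0 < p\<close> by (simp add: field_simps)
  also have "\<dots> \<le> p * x" using x assms by (intro mult_left_mono) auto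
  finally have "0 \<le> (p/2 - 1 + p * x) / (x * (1 - 2*x))"
    using \<open>0 < x\<close> \<open>x < 1/2\<close> by (intro divide_nonneg_pos) auto
  then show "\<exists>d. (Lsq_deriv_log_ratio p has_real_derivative d) (at x) \<and> 0 \<le> d"
    using has_real_derivative_Lsq_deriv_log_ratio[OF \<open>0 < x\<close> \<open>x < 1/2\<close>] by blast
qed

lemma Lsq_deriv_log_ratio_quarter: "Lsq_deriv_log_ratio p (1/4) = 0"
proof -
  have "ln (1/4 :: real) = 2 * ln (1/2)"
    using ln_realpow[of "1/2" 2] by (simp add: power2_eq_square)
  then show ?thesis
    unfolding Lsq_deriv_log_ratio_def by (simp add: ln_div algebra_simps)
qed

lemma Lsq_deriv_no_neg_to_pos:
  assumes "0 < p" "0 < s" "s < t" "t < 1/4"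
    and "Lsq_deriv p s < 0" "0 < Lsq_deriv p t"
  shows False
proof -
  have "s < 1/2" "t < 1/2" using assms by auto
  have "Lsq_deriv_log_ratio p s < 0"
    using sgn_Lsq_deriv[OF \<open>0 < p\<close> \<open>0 < s\<close> \<open>s < 1/2\<close>] assms by (metis sgn_less)
  moreover have "0 < Lsq_deriv_log_ratio p t"
    using sgn_Lsq_deriv[OF \<open>0 < p\<close> _ \<open>t < 1/2\<close>] assms by (metis sgn_greater order.strict_trans)
  moreover have "Lsq_deriv_log_ratio p t \<le> Lsq_deriv_log_ratio p s" if "t \<le> 1/p - 1/2"
    using Lsq_deriv_log_ratio_antimono[of p s t] assms that by simp
  moreover have "Lsq_deriv_log_ratio p t \<le> 0" if "1/p - 1/2 \<le> t"
    using Lsq_deriv_log_ratio_mono[of p t "1/4"] Lsq_deriv_log_ratio_quarter assms that by simp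
  ultimately show False by linarith
qed

lemma Lsq_ge_one:
  assumes "0 < p" "2 powr p \<le> 3" "y \<in> {0..1/4}"
  shows "1 \<le> Lsq p y"
proof -
  have "continuous_on {0..1/4} (Lsq p)"
    unfolding Lsq_def[abs_def] using \<open>0 < p\<close>
    by (intro continuous_intros continuous_on_powr') (auto intro!: continuous_intros)
  moreover have "Lsq p 0 = 1" unfolding Lsq_def by simp
  moreover have "Lsq p (1/4) = 3 / 2 powr p"
    using power2_powr_half[of "1/2" p] by (simp add: Lsq_def power2_eq_square powr_divide)
  ultimately show ?thesis
    using min_endpoints_le_if_derivative_no_neg_to_pos[of 0 "1/4" "Lsq p" "Lsq_deriv p" y]
      has_real_derivative_Lsq Lsq_deriv_no_neg_to_pos[OF \<open>0 < p\<close>] assms by fastforce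
qed

theorem lemma2p5:
  fixes p :: real
  assumes "4/3 \<le> p" and "p \<le> ln 3 / ln 2"
  shows "(\<forall>\<alpha>\<in>{0..pi/3}. Lfun p \<alpha> \<ge> min (Lfun p 0) (Lfun p (pi/3)))
       \<and> (\<forall>\<alpha>\<in>{0..pi/3}. Lfun p \<alpha> \<ge> 2)"
proof -
  have "0 < p" using assms(1) by simp
  have "2 powr p \<le> 3" using assms(2) by (rule two_powr_le_three)
  have ge_two: "2 \<le> Lfun p \<alpha>" if "\<alpha> \<in> {0..pi/3}" for \<alpha>
  proof -
    have "(sin (\<alpha>/2))\<^sup>2 \<le> (1/2)\<^sup>2"
      using sin_half_bounds[OF that] by (intro power_mono)
    then have "(sin (\<alpha>/2))\<^sup>2 \<in> {0..1/4}" by (simp add: power2_eq_square)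
    then show ?thesis
      using Lfun_eq_Lsq[OF sin_half_bounds(1)[OF that]] Lsq_ge_one \<open>0 < p\<close> \<open>2 powr p \<le> 3\<close>
      by fastforce
  qed
  moreover have "Lfun p 0 = 2" by (simp add: Lfun_def)
  ultimately show ?thesis by (simp add: min.coboundedI1)
qed

end
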